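(* In the standing setup, let $n\ge1$, let $I$ be a nonempty subset of $\{1,\dots,n\}$, and set $\delta:=\max\{|t_i-t_j|:i,j\in I\}$. Then $$\Big\|\frac1n\sum_{k=1}^n x_k\Big\|\ge\frac{\#I}{n}\,\rho_\infty\exp(-\delta^2/2)>0.$$
   Context: Standing setup. $X$ is a real Hilbert space. $u\colon[0,\infty)\to X$ satisfies $\langle u(s),u(t)\rangle=\exp(-(s-t)^2)$ for all $s,t\ge0$. $(d_n)_{n\ge1}$ satisfies: $d_n>0$, $\sum_k d_k^2<\infty$, $t_n:=\sum_{k=1}^{n-1}d_k\to+\infty$, $d_1\le1/8$, $d_{n+1}\le d_n/(1+64d_n^2)$ for all $n$. $\rho_1:=1$, $\rho_{n+1}:=\rho_n\exp(-d_n^2)$, $\rho_\infty:=\exp(-\sum_k d_k^2)$, $x_n:=\rho_nu(t_n)$. $\#I$ is the cardinality of $I$. *)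

theory Defs
  imports "HOL-Analysis.Analysis"
begin

text \<open>The sequence d is indexed from 1; d 0 is irrelevant.\<close>

definition tseq :: "(nat \<Rightarrow> real) \<Rightarrow> nat \<Rightarrow> real" where
  "tseq d n = (\<Sum>k\<in>{1..<n}. d k)"

definition rhoseq :: "(nat \<Rightarrow> real) \<Rightarrow> nat \<Rightarrow> real" where
  "rhoseq d n = (\<Prod>k\<in>{1..<n}. exp (- (d k)\<^sup>2))"

definition rho_inf :: "(nat \<Rightarrow> real) \<Rightarrow> real" where
  "rho_inf d = exp (- (\<Sum>k. (d (Suc k))\<^sup>2))"

definition xseq :: "(real \<Rightarrow> 'a::real_vector) \<Rightarrow> (nat \<Rightarrow> real) \<Rightarrow> nat \<Rightarrow> 'a" where
  "xseq u d n = rhoseq d n *\<^sub>R u (tseq d n)"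

end

theory Submission
  imports Defs
begin

text \<open>The Gram entries \<open>\<langle>x\<^sub>k, x\<^sub>l\<rangle> = \<rho>\<^sub>k \<rho>\<^sub>l exp (-(t\<^sub>k - t\<^sub>l)\<^sup>2)\<close> are all positive, so
  dropping the pairs outside \<open>I \<times> I\<close> only decreases \<open>\<parallel>\<Sum>\<^sub>k x\<^sub>k\<parallel>\<^sup>2\<close>. On \<open>I \<times> I\<close> each entry
  is at least \<open>\<rho>\<^sub>\<infinity>\<^sup>2 exp (-\<delta>\<^sup>2)\<close>, whence \<open>\<parallel>\<Sum>\<^sub>k x\<^sub>k\<parallel>\<^sup>2 \<ge> (#I)\<^sup>2 \<rho>\<^sub>\<infinity>\<^sup>2 exp (-\<delta>\<^sup>2)\<close>.\<close>

lemma card_mult_le_norm_sum: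
  fixes x :: "'i \<Rightarrow> 'a::real_inner"
  assumes "finite A" and "I \<subseteq> A" and "c \<ge> 0"
    and gram_nonneg: "\<And>k l. k \<in> A \<Longrightarrow> l \<in> A \<Longrightarrow> inner (x k) (x l) \<ge> 0"
    and gram_ge: "\<And>k l. k \<in> I \<Longrightarrow> l \<in> I \<Longrightarrow> inner (x k) (x l) \<ge> c\<^sup>2"
  shows "real (card I) * c \<le> norm (sum x A)"
proof (rule power2_le_imp_le)
  have "(real (card I) * c)\<^sup>2 = (\<Sum>k\<in>I. \<Sum>l\<in>I. c\<^sup>2)"
    by (simp add: power_mult_distrib power2_eq_square)
  also have "\<dots> \<le> (\<Sum>k\<in>I. \<Sum>l\<in>I. inner (x k) (x l))"
    by (intro sum_mono gram_ge)
  also have "\<dots> \<le> (\<Sum>k\<in>I. \<Sum>l\<in>A. inner (x k) (x l))"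
    using assms(1,2) gram_nonneg by (intro sum_mono sum_mono2) auto
  also have "\<dots> \<le> (\<Sum>k\<in>A. \<Sum>l\<in>A. inner (x k) (x l))"
    using assms(1,2) gram_nonneg by (intro sum_mono2 sum_nonneg) auto
  also have "\<dots> = (norm (sum x A))\<^sup>2"
    by (simp add: power2_norm_eq_inner inner_sum_left inner_sum_right) (rule sum.swap)
  finally show "(real (card I) * c)\<^sup>2 \<le> (norm (sum x A))\<^sup>2" .
qed simp

lemma tseq_nonneg:
  assumes "\<And>k. k \<ge> 1 \<Longrightarrow> d k \<ge> 0"
  shows "tseq d n \<ge> 0"
  unfolding tseq_def using assms by (intro sum_nonneg) auto

lemma rhoseq_pos: "rhoseq d n > 0"
  unfolding rhoseq_def by (simp add: prod_pos)

lemma rho_inf_pos: "rho_inf d > 0"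
  unfolding rho_inf_def by simp

lemma rho_inf_le_rhoseq:
  assumes "summable (\<lambda>k. (d (Suc k))\<^sup>2)"
  shows "rho_inf d \<le> rhoseq d n"
proof -
  have "(\<Sum>j\<in>{1..<n}. (d j)\<^sup>2) \<le> (\<Sum>j\<in>{1..n}. (d j)\<^sup>2)"
    by (intro sum_mono2) auto
  also have "\<dots> = (\<Sum>i<n. (d (Suc i))\<^sup>2)"
    by (simp add: sum.atLeast1_atMost_eq)
  also have "\<dots> \<le> (\<Sum>i. (d (Suc i))\<^sup>2)"
    using assms by (rule sum_le_suminf) auto
  finally have "(\<Sum>j\<in>{1..<n}. (d j)\<^sup>2) \<le> (\<Sum>i. (d (Suc i))\<^sup>2)" .
  moreover have "rhoseq d n = exp (- (\<Sum>j\<in>{1..<n}. (d j)\<^sup>2))"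
    unfolding rhoseq_def by (simp add: exp_sum[symmetric] sum_negf)
  ultimately show ?thesis
    unfolding rho_inf_def by simp
qed

lemma inner_xseq:
  assumes "\<And>s t. s \<ge> 0 \<Longrightarrow> t \<ge> 0 \<Longrightarrow> inner (u s) (u t) = exp (- (s - t)\<^sup>2)"
    and "\<And>k. k \<ge> 1 \<Longrightarrow> d k \<ge> 0"
  shows "inner (xseq u d k) (xseq u d l)
           = rhoseq d k * rhoseq d l * exp (- (tseq d k - tseq d l)\<^sup>2)"
  using assms(1)[OF tseq_nonneg tseq_nonneg] assms(2) unfolding xseq_def by simp

lemma inner_xseq_ge:
  assumes "\<And>s t. s \<ge> 0 \<Longrightarrow> t \<ge> 0 \<Longrightarrow> inner (u s) (u t) = exp (- (s - t)\<^sup>2)"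
    and "\<And>k. k \<ge> 1 \<Longrightarrow> d k \<ge> 0"
    and "summable (\<lambda>k. (d (Suc k))\<^sup>2)"
    and "\<bar>tseq d k - tseq d l\<bar> \<le> \<delta>"
  shows "(rho_inf d * exp (- \<delta>\<^sup>2 / 2))\<^sup>2 \<le> inner (xseq u d k) (xseq u d l)"
proof -
  have rho: "rho_inf d * rho_inf d \<le> rhoseq d k * rhoseq d l"
    using rho_inf_le_rhoseq[OF assms(3)] rho_inf_pos[of d] rhoseq_pos[of d k]
    by (intro mult_mono) auto
  have "\<bar>tseq d k - tseq d l\<bar>\<^sup>2 \<le> \<delta>\<^sup>2"
    using assms(4) by (intro power_mono) auto
  then have gauss: "exp (- \<delta>\<^sup>2) \<le> exp (- (tseq d k - tseq d l)\<^sup>2)"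
    by simp
  have "(rho_inf d * exp (- \<delta>\<^sup>2 / 2))\<^sup>2 = rho_inf d * rho_inf d * exp (- \<delta>\<^sup>2)"
    by (simp add: power_mult_distrib power2_eq_square mult_exp_exp)
  also have "\<dots> \<le> rhoseq d k * rhoseq d l * exp (- (tseq d k - tseq d l)\<^sup>2)"
    by (rule mult_mono[OF rho gauss]) (use rhoseq_pos[of d k] rhoseq_pos[of d l] in auto)
  also have "\<dots> = inner (xseq u d k) (xseq u d l)"
    by (rule inner_xseq[OF assms(1,2), symmetric])
  finally show ?thesis .
qed

theorem lemma6p5:
  fixes u :: "real \<Rightarrow> 'a::{real_inner, complete_space}"
    and d :: "nat \<Rightarrow> real" and n :: nat and I :: "nat set"
  assumes u_inner: "\<And>s t. s \<ge> 0 \<Longrightarrow> t \<ge> 0 \<Longrightarrow> inner (u s) (u t) = exp (- (s - t)\<^sup>2)"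
    and d_pos: "\<And>k. k \<ge> 1 \<Longrightarrow> d k > 0"
    and d_sq: "summable (\<lambda>k. (d (Suc k))\<^sup>2)"
    and t_inf: "filterlim (tseq d) at_top sequentially"
    and d1: "d 1 \<le> 1/8"
    and d_rec: "\<And>k. k \<ge> 1 \<Longrightarrow> d (k + 1) \<le> d k / (1 + 64 * (d k)\<^sup>2)"
    and n1: "n \<ge> 1"
    and I_sub: "I \<subseteq> {1..n}" and I_ne: "I \<noteq> {}"
  shows "norm ((1 / real n) *\<^sub>R (\<Sum>k\<in>{1..n}. xseq u d k))
           \<ge> real (card I) / real n * rho_inf d
              * exp (- (Max {\<bar>tseq d i - tseq d j\<bar> | i j. i \<in> I \<and> j \<in> I})\<^sup>2 / 2)
       \<and> real (card I) / real n * rho_inf d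
              * exp (- (Max {\<bar>tseq d i - tseq d j\<bar> | i j. i \<in> I \<and> j \<in> I})\<^sup>2 / 2) > 0"
proof -
  define \<delta> where "\<delta> = Max {\<bar>tseq d i - tseq d j\<bar> | i j. i \<in> I \<and> j \<in> I}"
  define c where "c = rho_inf d * exp (- \<delta>\<^sup>2 / 2)"
  have d_nonneg: "\<And>k. k \<ge> 1 \<Longrightarrow> d k \<ge> 0"
    using d_pos less_imp_le by blast
  have "finite I"
    using I_sub finite_subset by blast
  then have diam: "\<bar>tseq d k - tseq d l\<bar> \<le> \<delta>" if "k \<in> I" "l \<in> I" for k l
    unfolding \<delta>_def using that by (intro Max_ge) (auto simp: finite_image_set2)
  have "real (card I) * c \<le> norm (\<Sum>k\<in>{1..n}. xseq u d k)"
  proof (rule card_mult_le_norm_sum[OF _ I_sub])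
    show "0 \<le> c"
      unfolding c_def using rho_inf_pos[of d] by simp
    show "0 \<le> inner (xseq u d k) (xseq u d l)" for k l
      using rhoseq_pos[of d k] rhoseq_pos[of d l] by (simp add: inner_xseq[OF u_inner d_nonneg])
    show "c\<^sup>2 \<le> inner (xseq u d k) (xseq u d l)" if "k \<in> I" "l \<in> I" for k l
      unfolding c_def by (rule inner_xseq_ge[OF u_inner d_nonneg d_sq diam[OF that]])
  qed simp
  then have "real (card I) / real n * c \<le> norm ((1 / real n) *\<^sub>R (\<Sum>k\<in>{1..n}. xseq u d k))"
    using n1 by (simp add: divide_right_mono)
  moreover have "real (card I) / real n * c > 0"
    unfolding c_def using \<open>finite I\<close> I_ne n1 rho_inf_pos[of d] by (simp add: card_gt_0_iff)
  ultimately show ?thesis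
    unfolding \<delta>_def[symmetric] c_def by (simp only: mult.assoc)
qed

end
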